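(* Let $(X,\mathsf{d},\mathfrak m)$ be a metric measure space, let $p\ge 1$, and let $(\rho_n)_{n\in\mathbb N}$ be a sequence of non-negative, symmetric, measurable functions defined on $\{(x,y)\in X\times X: x\neq y\}$ satisfying conditions (A), (B), (C) below. For $u\in L^p(X,\mathfrak m)$ and $n\in\mathbb N$ set \[ \mathcal E_n(u):=\iint_{\{(x,y)\in X\times X:\,x\neq y\}}|u(x)-u(y)|^p\,\rho_n(x,y)\,\mathrm d\mathfrak m(x)\,\mathrm d\mathfrak m(y). \] The conditions are: (A) there is a constant $L\ge 0$ such that for every $x\in X$ \[ \lim_{R\to+\infty}\limsup_{n\to\infty}\int_{B^c_R(x)}\rho_n(x,y)\,\mathrm d\mathfrak m(y)=\lim_{R\to+\infty}\liminf_{n\to\infty}\int_{B^c_R(x)}\rho_n(x,y)\,\mathrm d\mathfrak m(y)=L, \] where $B^c_R(x)=\{y\in X:\mathsf d(x,y)\ge R\}$; (B) for every $u\in L^p(X,\mathfrak m)$ for which there exists $n_0\in\mathbb N$ with $\mathcal E_{n_0}(u)<+\infty$, one has for every $R>0$ \[ \lim_{n\to\infty}\iint_{\{(x,y):\,0<\mathsf d(x,y)<R\}}|u(x)-u(y)|^p\rho_n(x,y)\,\mathrm d\mathfrak m(x)\,\mathrm d\mathfrak m(y)=0; \] (C) for every sufficiently large $R>0$ there is a constant $C=C(R)$ such that $\int_{B^c_R(x)}\rho_n(x,y)\,\mathrm d\mathfrak m(y)\le C$ for all $x\in X$ and all $n\in\mathbb N$. Then for every $u\in L^p(X,\mathfrak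 m)$ such that $\mathcal E_{n_0}(u)<+\infty$ for some $n_0\in\mathbb N$, it holds \[ \lim_{n\to\infty}\mathcal E_n(u)=2L\,\|u\|^p_{L^p}. \]
   Context: A metric measure space is a triple $(X,\mathsf d,\mathfrak m)$ where $(X,\mathsf d)$ is a complete separable metric space and $\mathfrak m$ is a locally finite non-negative Borel measure on $X$ with full support. *)

theory Defs
  imports "HOL-Analysis.Analysis"
begin

text \<open>Metric measure space: (X,d) complete separable metric space (type class polish_space),
  m a Borel measure on X, locally finite, with full support.\<close>
definition mms :: "'a::polish_space measure \<Rightarrow> bool" where
  "mms m \<longleftrightarrow> sets m = sets borel
     \<and> (\<forall>x. \<exists>e>0. emeasure m (ball x e) < \<infinity>)
     \<and> (\<forall>U. open U \<and> U \<noteq> {} \<longrightarrow> emeasure m U > 0)"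

definition in_Lp :: "'a measure \<Rightarrow> real \<Rightarrow> ('a \<Rightarrow> real) \<Rightarrow> bool" where
  "in_Lp m p u \<longleftrightarrow> u \<in> borel_measurable m \<and> (\<integral>\<^sup>+ x. ennreal (\<bar>u x\<bar> powr p) \<partial>m) < \<infinity>"

definition Lp_norm_pow :: "'a measure \<Rightarrow> real \<Rightarrow> ('a \<Rightarrow> real) \<Rightarrow> ennreal" where
  "Lp_norm_pow m p u = (\<integral>\<^sup>+ x. ennreal (\<bar>u x\<bar> powr p) \<partial>m)"

definition dbl_energy :: "'a measure \<Rightarrow> real \<Rightarrow> ('a \<Rightarrow> 'a \<Rightarrow> real) \<Rightarrow> ('a \<times> 'a) set
    \<Rightarrow> ('a \<Rightarrow> real) \<Rightarrow> ennreal" where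
  "dbl_energy m p \<rho> S u =
     (\<integral>\<^sup>+ y. (\<integral>\<^sup>+ x. indicator S (x, y) * ennreal (\<bar>u x - u y\<bar> powr p * \<rho> x y) \<partial>m) \<partial>m)"

definition energy :: "'a measure \<Rightarrow> real \<Rightarrow> ('a \<Rightarrow> 'a \<Rightarrow> real) \<Rightarrow> ('a \<Rightarrow> real) \<Rightarrow> ennreal" where
  "energy m p \<rho> u = dbl_energy m p \<rho> {(x, y). x \<noteq> y} u"

definition tail :: "'a::metric_space measure \<Rightarrow> ('a \<Rightarrow> 'a \<Rightarrow> real) \<Rightarrow> 'a \<Rightarrow> real \<Rightarrow> ennreal" where
  "tail m \<rho> x R = (\<integral>\<^sup>+ y. indicator {y. y \<noteq> x \<and> dist x y \<ge> R} y * ennreal (\<rho> x y) \<partial>m)"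

end

theory Submission
  imports Defs
begin

(* Split E_n(u) into the integral over pairs at distance < R, which vanishes by (B), and the
   integral over far pairs, d(x,y) >= R. For a far pair at least one of x, y lies outside the ball
   of radius R/2 around a fixed point, where u carries little L^p mass. By convexity of t^p,
   |u x - u y|^p is then comparable to |u x|^p + |u y|^p up to a factor l^(1-p) close to 1 and an
   error controlled, via (C), by that mass. By symmetry of rho_n the far integral of
   |u x|^p + |u y|^p equals 2 * int |u x|^p tail_n(x, R) dm(x), and Fatou's lemma together with
   its reverse form (dominated thanks to (C)) turns (A) into the limit L ||u||^p; the limits are
   taken first in n, then in R, and finally l -> 1. *)

lemma powr_le_weighted_sum:
  fixes x s t l p :: real
  assumes p: "1 \<le> p" and l: "0 < l" "l < 1"
    and st: "0 \<le> s" "0 \<le> t" and x: "0 \<le> x" "x \<le> s + t"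
  shows "x powr p \<le> l powr (1 - p) * s powr p + (1 - l) powr (1 - p) * t powr p"
proof -
  have "x powr p \<le> (s + t) powr p"
    using p x by (intro powr_mono2) auto
  also have "\<dots> \<le> l powr (1 - p) * s powr p + (1 - l) powr (1 - p) * t powr p"
  proof (cases "s = 0 \<or> t = 0")
    case True
    have "1 \<le> l powr (1 - p)" "1 \<le> (1 - l) powr (1 - p)"
      using l p powr_mono'[of "1 - p" 0 l] powr_mono'[of "1 - p" 0 "1 - l"] by auto
    then show ?thesis
      using True st mult_right_mono[of 1 _ "s powr p"] mult_right_mono[of 1 _ "t powr p"] by auto
  next
    case False
    then have "0 < s" "0 < t"
      using st by auto
    then have "(l *\<^sub>R (s / l) + (1 - l) *\<^sub>R (t / (1 - l))) powr p
        \<le> l * (s / l) powr p + (1 - l) * (t / (1 - l)) powr p"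
      using l convex_onD[OF powr_convex[OF p], of "1 - l" "s / l" "t / (1 - l)"] by auto
    then show ?thesis
      using l st by (simp add: powr_divide powr_diff)
  qed
  finally show ?thesis .
qed

lemma abs_diff_powr_le_split:
  fixes a b hx hy l p :: real
  assumes p: "1 \<le> p" and l: "0 < l" "l < 1"
    and h: "hx = \<bar>a\<bar> powr p \<or> hy = \<bar>b\<bar> powr p" "0 \<le> hx" "0 \<le> hy"
  shows "\<bar>a - b\<bar> powr p
    \<le> l powr (1 - p) * (\<bar>a\<bar> powr p + \<bar>b\<bar> powr p) + (1 - l) powr (1 - p) * (hx + hy)"
proof -
  have *: "\<bar>a - b\<bar> powr p
      \<le> l powr (1 - p) * (\<bar>a\<bar> powr p + \<bar>b\<bar> powr p) + (1 - l) powr (1 - p) * (hx + hy)"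
    if "hy = \<bar>b\<bar> powr p" "0 \<le> hx" for a b hx hy
  proof -
    have "\<bar>a - b\<bar> powr p
        \<le> l powr (1 - p) * \<bar>a\<bar> powr p + (1 - l) powr (1 - p) * \<bar>b\<bar> powr p"
      using p l by (intro powr_le_weighted_sum) auto
    also have "\<dots> \<le> l powr (1 - p) * (\<bar>a\<bar> powr p + \<bar>b\<bar> powr p) + (1 - l) powr (1 - p) * (hx + hy)"
      using that by (intro add_mono mult_left_mono) auto
    finally show ?thesis .
  qed
  from h(1) show ?thesis
  proof
    assume "hy = \<bar>b\<bar> powr p"
    then show ?thesis
      using h(2) by (rule *)
  next
    assume "hx = \<bar>a\<bar> powr p"
    then have "\<bar>b - a\<bar> powr p
        \<le> l powr (1 - p) * (\<bar>b\<bar> powr p + \<bar>a\<bar> powr p) + (1 - l) powr (1 - p) * (hy + hx)"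
      using h(3) by (rule *)
    then show ?thesis
      by (simp add: abs_minus_commute add.commute)
  qed
qed

lemma abs_powr_add_le_split:
  fixes a b hx hy l p :: real
  assumes p: "1 \<le> p" and l: "0 < l" "l < 1"
    and h: "hx = \<bar>a\<bar> powr p \<or> hy = \<bar>b\<bar> powr p" "0 \<le> hx" "0 \<le> hy"
  shows "\<bar>a\<bar> powr p + \<bar>b\<bar> powr p
    \<le> l powr (1 - p) * \<bar>a - b\<bar> powr p + ((1 - l) powr (1 - p) + 1) * (hx + hy)"
proof -
  have *: "\<bar>a\<bar> powr p + \<bar>b\<bar> powr p
      \<le> l powr (1 - p) * \<bar>a - b\<bar> powr p + ((1 - l) powr (1 - p) + 1) * (hx + hy)"
    if "hy = \<bar>b\<bar> powr p" "0 \<le> hx" for a b hx hy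
  proof -
    have "\<bar>a\<bar> powr p
        \<le> l powr (1 - p) * \<bar>a - b\<bar> powr p + (1 - l) powr (1 - p) * \<bar>b\<bar> powr p"
      using p l by (intro powr_le_weighted_sum) auto
    moreover have "((1 - l) powr (1 - p) + 1) * \<bar>b\<bar> powr p
        \<le> ((1 - l) powr (1 - p) + 1) * (hx + hy)"
      using that by (intro mult_left_mono) auto
    ultimately show ?thesis
      by (simp add: algebra_simps)
  qed
  from h(1) show ?thesis
  proof
    assume "hy = \<bar>b\<bar> powr p"
    then show ?thesis
      using h(2) by (rule *)
  next
    assume "hx = \<bar>a\<bar> powr p"
    then have "\<bar>b\<bar> powr p + \<bar>a\<bar> powr p
        \<le> l powr (1 - p) * \<bar>b - a\<bar> powr p + ((1 - l) powr (1 - p) + 1) * (hy + hx)"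
      using h(3) by (rule *)
    then show ?thesis
      by (simp add: abs_minus_commute add.commute)
  qed
qed

lemma Limsup_affine_ennreal:
  fixes a b :: ennreal
  assumes "a < top" "F \<noteq> bot"
  shows "Limsup F (\<lambda>x. a * f x + b) = a * Limsup F f + b"
  using assms
  by (intro Limsup_compose_continuous_mono[where f = "\<lambda>t. a * t + b"] monoI add_right_mono
      mult_left_mono continuous_on_add ennreal_continuous_on_cmult continuous_on_id
      continuous_on_const) auto

lemma Liminf_affine_ennreal:
  fixes a b :: ennreal
  assumes "a < top" "F \<noteq> bot"
  shows "Liminf F (\<lambda>x. a * f x + b) = a * Liminf F f + b"
  using assms
  by (intro Liminf_compose_continuous_mono[where f = "\<lambda>t. a * t + b"] monoI add_right_mono
      mult_left_mono continuous_on_add ennreal_continuous_on_cmult continuous_on_id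
      continuous_on_const) auto

lemma Limsup_add_tendsto_0_ennreal:
  fixes f g :: "'b \<Rightarrow> ennreal"
  assumes f: "(f \<longlongrightarrow> 0) F" and F: "F \<noteq> bot"
  shows "Limsup F (\<lambda>x. f x + g x) \<le> Limsup F g"
proof (rule ennreal_le_epsilon)
  fix e :: real
  assume "0 < e"
  then have "eventually (\<lambda>x. f x + g x \<le> 1 * g x + ennreal e) F"
    using order_tendstoD(2)[OF f, of "ennreal e"] by (auto elim: eventually_mono simp: add.commute)
  then have "Limsup F (\<lambda>x. f x + g x) \<le> Limsup F (\<lambda>x. 1 * g x + ennreal e)"
    by (rule Limsup_mono)
  also have "\<dots> = Limsup F g + ennreal e"
    using F by (subst Limsup_affine_ennreal) auto
  finally show "Limsup F (\<lambda>x. f x + g x) \<le> Limsup F g + ennreal e" .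
qed

lemma tendsto_ennreal_powr_at_left_1: "((\<lambda>l. ennreal (l powr a)) \<longlongrightarrow> 1) (at_left (1::real))"
proof -
  have "((\<lambda>l::real. l powr a) \<longlongrightarrow> 1 powr a) (at_left 1)"
    by (intro tendsto_powr tendsto_ident_at tendsto_const) simp
  then show ?thesis
    using tendsto_ennrealI by fastforce
qed

lemma filterlim_half_at_top: "filterlim (\<lambda>R::real. R / 2) at_top at_top"
  using filterlim_at_top_mult_tendsto_pos[OF tendsto_const[of "1 / 2 :: real"] _ filterlim_ident]
  by simp

lemma nn_integral_dominated_convergence_at_top:
  fixes f :: "real \<Rightarrow> 'b \<Rightarrow> ennreal"
  assumes [measurable]: "\<And>t. f t \<in> borel_measurable M" "g \<in> borel_measurable M"
    "w \<in> borel_measurable M"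
    and bound: "\<And>t x. t0 \<le> t \<Longrightarrow> f t x \<le> w x" and w: "(\<integral>\<^sup>+x. w x \<partial>M) < \<infinity>"
    and lim: "\<And>x. ((\<lambda>t. f t x) \<longlongrightarrow> g x) at_top"
  shows "((\<lambda>t. \<integral>\<^sup>+x. f t x \<partial>M) \<longlongrightarrow> (\<integral>\<^sup>+x. g x \<partial>M)) at_top"
proof (rule tendsto_at_topI_sequentially)
  fix X :: "nat \<Rightarrow> real"
  assume X: "filterlim X at_top sequentially"
  then have "filterlim (\<lambda>n. max t0 (X n)) at_top sequentially"
    by (rule filterlim_at_top_mono) auto
  then have "(\<lambda>n. \<integral>\<^sup>+x. f (max t0 (X n)) x \<partial>M) \<longlonglongrightarrow> (\<integral>\<^sup>+x. g x \<partial>M)"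
    using lim bound w
    by (intro nn_integral_dominated_convergence[where w = w] AE_I2 filterlim_compose[OF lim]) auto
  moreover have "eventually (\<lambda>n. t0 \<le> X n) sequentially"
    using X by (simp add: filterlim_at_top)
  then have "eventually (\<lambda>n. (\<integral>\<^sup>+x. f (max t0 (X n)) x \<partial>M) = (\<integral>\<^sup>+x. f (X n) x \<partial>M))
      sequentially"
    by (auto elim: eventually_mono simp: max.absorb2)
  ultimately show "(\<lambda>n. \<integral>\<^sup>+x. f (X n) x \<partial>M) \<longlonglongrightarrow> (\<integral>\<^sup>+x. g x \<partial>M)"
    by (rule Lim_transform_eventually)
qed

lemma space_mms: "mms m \<Longrightarrow> space m = UNIV"
  unfolding mms_def by (metis sets_eq_imp_space_eq space_borel)

lemma sets_pair_mms: "mms m \<Longrightarrow> sets (m \<Otimes>\<^sub>M m) = sets borel"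
  unfolding mms_def using sets_pair_measure_cong borel_prod by metis

lemma mms_sigma_finite:
  assumes "mms m"
  shows "sigma_finite_measure m"
proof
  obtain e where e: "\<And>x. 0 < e x" "\<And>x. emeasure m (ball x (e x)) < \<infinity>"
    using assms unfolding mms_def by metis
  obtain \<B> where \<B>: "\<B> \<subseteq> range (\<lambda>x. ball x (e x))" "countable \<B>"
    "\<Union>\<B> = \<Union>(range (\<lambda>x. ball x (e x)))"
    using Lindelof[of "range (\<lambda>x. ball x (e x))"] by auto
  have "\<Union>\<B> = space m"
    using \<B>(3) e(1) space_mms[OF assms] by auto
  moreover have "\<B> \<subseteq> sets m"
    using \<B>(1) assms unfolding mms_def by auto
  moreover have "\<forall>B\<in>\<B>. emeasure m B \<noteq> \<infinity>"
    using \<B>(1) e(2) by (auto simp: less_top[symmetric])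
  ultimately show "\<exists>\<B>. countable \<B> \<and> \<B> \<subseteq> sets m \<and> \<Union>\<B> = space m
      \<and> (\<forall>B\<in>\<B>. emeasure m B \<noteq> \<infinity>)"
    using \<B>(2) by blast
qed

definition far_pairs :: "real \<Rightarrow> ('a::metric_space \<times> 'a) set" where
  "far_pairs R = {(x, y). x \<noteq> y \<and> R \<le> dist x y}"

definition near_pairs :: "real \<Rightarrow> ('a::metric_space \<times> 'a) set" where
  "near_pairs R = {(x, y). 0 < dist x y \<and> dist x y < R}"

lemma far_pairs_in_borel: "far_pairs R \<in> sets borel"
proof -
  have eq: "far_pairs R = {z. R \<le> dist (fst z) (snd z)} - {z. fst z = snd z}"
    by (auto simp: far_pairs_def)
  have "closed {z::'a \<times> 'a. R \<le> dist (fst z) (snd z)}"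
    by (intro closed_Collect_le continuous_intros)
  moreover have "closed {z::'a \<times> 'a. fst z = snd z}"
    by (intro closed_Collect_eq continuous_intros)
  ultimately show ?thesis
    unfolding eq by (intro sets.Diff borel_closed)
qed

lemma near_pairs_in_borel: "near_pairs R \<in> sets borel"
proof -
  have eq: "near_pairs R = {z. 0 < dist (fst z) (snd z)} \<inter> {z. dist (fst z) (snd z) < R}"
    by (auto simp: near_pairs_def)
  have "open {z::'a \<times> 'a. 0 < dist (fst z) (snd z)}"
    by (intro open_Collect_less continuous_intros)
  moreover have "open {z::'a \<times> 'a. dist (fst z) (snd z) < R}"
    by (intro open_Collect_less continuous_intros)
  ultimately show ?thesis
    unfolding eq by (intro sets.Int borel_open)
qed

lemma far_pair_outside_ball:
  assumes "(x, y) \<in> far_pairs R"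
  shows "R / 2 \<le> dist x0 x \<or> R / 2 \<le> dist x0 y"
  using assms dist_triangle3[of x y x0] by (auto simp: far_pairs_def)

lemma tail_antimono: "R \<le> R' \<Longrightarrow> tail m \<rho> x R' \<le> tail m \<rho> x R"
  unfolding tail_def by (intro nn_integral_mono) (auto split: split_indicator)

lemma liminf_tail_ge_limit:
  assumes "((\<lambda>R. liminf (\<lambda>n. tail m (\<rho> n) x R)) \<longlongrightarrow> c) at_top"
  shows "c \<le> liminf (\<lambda>n. tail m (\<rho> n) x R)"
proof (rule tendsto_upperbound[OF assms])
  show "eventually (\<lambda>R'. liminf (\<lambda>n. tail m (\<rho> n) x R') \<le> liminf (\<lambda>n. tail m (\<rho> n) x R)) at_top"
    using eventually_ge_at_top[of R]
    by (rule eventually_mono) (intro Liminf_mono always_eventually allI tail_antimono)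
qed simp

lemma uniform_tail_bound:
  assumes "\<exists>R0. \<forall>R\<ge>R0. R > 0 \<longrightarrow> (\<exists>C::real. \<forall>x n. tail m (\<rho> n) x R \<le> ennreal C)"
  obtains R1 C where "0 < R1" "\<And>R x n. R1 \<le> R \<Longrightarrow> tail m (\<rho> n) x R \<le> ennreal C"
proof -
  obtain R0 where R0: "\<And>R. R0 \<le> R \<Longrightarrow> R > 0 \<Longrightarrow> \<exists>C::real. \<forall>x n. tail m (\<rho> n) x R \<le> ennreal C"
    using assms by blast
  have "\<exists>C::real. \<forall>x n. tail m (\<rho> n) x (max R0 1) \<le> ennreal C"
    using R0[of "max R0 1"] by simp
  then obtain C where C: "\<And>x n. tail m (\<rho> n) x (max R0 1) \<le> ennreal C"
    by blast
  show ?thesis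
  proof
    show "0 < max R0 1"
      by simp
    show "tail m (\<rho> n) x R \<le> ennreal C" if "max R0 1 \<le> R" for R x n
      using tail_antimono[OF that] C by (rule order_trans)
  qed
qed

locale nonlocal_energy =
  fixes m :: "'a::polish_space measure" and p :: real and \<rho> :: "nat \<Rightarrow> 'a \<Rightarrow> 'a \<Rightarrow> real"
    and u :: "'a \<Rightarrow> real"
  assumes mms: "mms m"
    and p: "1 \<le> p"
    and symm: "\<And>n x y. x \<noteq> y \<Longrightarrow> \<rho> n x y = \<rho> n y x"
    and meas: "\<And>n. (\<lambda>(x, y). \<rho> n x y) \<in> borel_measurable (m \<Otimes>\<^sub>M m)"
    and u: "in_Lp m p u"
begin

sublocale m: sigma_finite_measure m
  using mms_sigma_finite[OF mms] .

sublocale pair_sigma_finite m m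
  by unfold_locales

lemma space_m [simp]: "space m = UNIV"
  using space_mms[OF mms] .

lemma sets_m [measurable_cong]: "sets m = sets borel"
  using mms unfolding mms_def by simp

lemma far_pairs_measurable [measurable]: "far_pairs R \<in> sets (m \<Otimes>\<^sub>M m)"
  using far_pairs_in_borel sets_pair_mms[OF mms] by simp

lemma near_pairs_measurable [measurable]: "near_pairs R \<in> sets (m \<Otimes>\<^sub>M m)"
  using near_pairs_in_borel sets_pair_mms[OF mms] by simp

lemma off_diagonal_measurable [measurable]: "{(x, y::'a). x \<noteq> y} \<in> sets (m \<Otimes>\<^sub>M m)"
proof -
  have "closed {z::'a \<times> 'a. fst z = snd z}"
    by (intro closed_Collect_eq continuous_intros)
  then have "- {z::'a \<times> 'a. fst z = snd z} \<in> sets borel"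
    by (intro borel_open) (simp add: open_Compl)
  moreover have "{(x, y::'a). x \<noteq> y} = - {z. fst z = snd z}"
    by auto
  ultimately show ?thesis
    using sets_pair_mms[OF mms] by simp
qed

lemma u_measurable [measurable]: "u \<in> borel_measurable m"
  using u unfolding in_Lp_def by simp

lemma Lp_norm_pow_finite: "Lp_norm_pow m p u < \<infinity>"
  using u unfolding in_Lp_def Lp_norm_pow_def by simp

lemma nn_integral_abs_powr_multc:
  "(\<integral>\<^sup>+x. ennreal (\<bar>u x\<bar> powr p) * c \<partial>m) = Lp_norm_pow m p u * c"
  unfolding Lp_norm_pow_def by (rule nn_integral_multc) measurable

lemma rho_measurable [measurable]:
  "(\<lambda>z. \<rho> n (fst z) (snd z)) \<in> borel_measurable (m \<Otimes>\<^sub>M m)"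
  using meas[of n] by (simp add: split_beta')

lemma rho_measurable_fst [measurable]: "(\<lambda>y. \<rho> n x y) \<in> borel_measurable m"
  using measurable_compose[OF measurable_Pair1' rho_measurable] by simp

lemma rho_measurable_snd [measurable]: "(\<lambda>x. \<rho> n x y) \<in> borel_measurable m"
  using measurable_compose[OF measurable_Pair2' rho_measurable] by simp

lemma tail_eq_far_pairs_fst:
  "tail m (\<rho> n) x R = (\<integral>\<^sup>+y. indicator (far_pairs R) (x, y) * ennreal (\<rho> n x y) \<partial>m)"
  unfolding tail_def by (intro nn_integral_cong) (auto simp: far_pairs_def split: split_indicator)

lemma tail_eq_far_pairs_snd:
  "tail m (\<rho> n) y R = (\<integral>\<^sup>+x. indicator (far_pairs R) (x, y) * ennreal (\<rho> n x y) \<partial>m)"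
  unfolding tail_def
  by (intro nn_integral_cong) (auto simp: far_pairs_def dist_commute symm split: split_indicator)

lemma tail_measurable [measurable]: "(\<lambda>x. tail m (\<rho> n) x R) \<in> borel_measurable m"
  unfolding tail_eq_far_pairs_fst by measurable

definition far_kernel :: "nat \<Rightarrow> real \<Rightarrow> ('a \<times> 'a) measure" where
  "far_kernel n R =
     density (m \<Otimes>\<^sub>M m) (\<lambda>z. indicator (far_pairs R) z * ennreal (\<rho> n (fst z) (snd z)))"

lemma sets_far_kernel [measurable_cong]: "sets (far_kernel n R) = sets (m \<Otimes>\<^sub>M m)"
  by (simp add: far_kernel_def)

lemma AE_far_kernel: "AE z in far_kernel n R. z \<in> far_pairs R"
  unfolding far_kernel_def by (subst AE_density) (auto split: split_indicator)

lemma nn_integral_far_kernel: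
  assumes [measurable]: "f \<in> borel_measurable (m \<Otimes>\<^sub>M m)"
  shows "(\<integral>\<^sup>+z. f z \<partial>far_kernel n R)
    = (\<integral>\<^sup>+z. indicator (far_pairs R) z * ennreal (\<rho> n (fst z) (snd z)) * f z \<partial>(m \<Otimes>\<^sub>M m))"
  unfolding far_kernel_def by (simp add: nn_integral_density)

lemma nn_integral_far_kernel_fst:
  assumes [measurable]: "w \<in> borel_measurable m"
  shows "(\<integral>\<^sup>+z. w (fst z) \<partial>far_kernel n R) = (\<integral>\<^sup>+x. w x * tail m (\<rho> n) x R \<partial>m)"
proof -
  have "(\<integral>\<^sup>+z. w (fst z) \<partial>far_kernel n R)
      = (\<integral>\<^sup>+x. \<integral>\<^sup>+y. indicator (far_pairs R) (x, y) * ennreal (\<rho> n x y) * w x \<partial>m \<partial>m)"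
    by (subst nn_integral_far_kernel, measurable, subst m.nn_integral_fst[symmetric]) auto
  also have "\<dots> = (\<integral>\<^sup>+x. w x * tail m (\<rho> n) x R \<partial>m)"
    unfolding tail_eq_far_pairs_fst by (subst nn_integral_cmult[symmetric]) (auto simp: ac_simps)
  finally show ?thesis .
qed

lemma nn_integral_far_kernel_snd:
  assumes [measurable]: "w \<in> borel_measurable m"
  shows "(\<integral>\<^sup>+z. w (snd z) \<partial>far_kernel n R) = (\<integral>\<^sup>+y. w y * tail m (\<rho> n) y R \<partial>m)"
proof -
  have "(\<integral>\<^sup>+z. w (snd z) \<partial>far_kernel n R)
      = (\<integral>\<^sup>+y. \<integral>\<^sup>+x. indicator (far_pairs R) (x, y) * ennreal (\<rho> n x y) * w y \<partial>m \<partial>m)"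
    by (subst nn_integral_far_kernel, measurable, subst nn_integral_snd[symmetric]) auto
  also have "\<dots> = (\<integral>\<^sup>+y. w y * tail m (\<rho> n) y R \<partial>m)"
    unfolding tail_eq_far_pairs_snd by (subst nn_integral_cmult[symmetric]) (auto simp: ac_simps)
  finally show ?thesis .
qed

lemma nn_integral_far_kernel_sym:
  assumes [measurable]: "w \<in> borel_measurable m"
  shows "(\<integral>\<^sup>+z. w (fst z) + w (snd z) \<partial>far_kernel n R)
    = 2 * (\<integral>\<^sup>+x. w x * tail m (\<rho> n) x R \<partial>m)"
  by (simp add: nn_integral_add nn_integral_far_kernel_fst nn_integral_far_kernel_snd mult_2)

lemma nn_integral_tail_le:
  assumes [measurable]: "w \<in> borel_measurable m"
    and bound: "\<And>x. tail m (\<rho> n) x R \<le> ennreal C"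
  shows "(\<integral>\<^sup>+x. w x * tail m (\<rho> n) x R \<partial>m) \<le> ennreal C * (\<integral>\<^sup>+x. w x \<partial>m)"
proof -
  have "(\<integral>\<^sup>+x. w x * tail m (\<rho> n) x R \<partial>m) \<le> (\<integral>\<^sup>+x. ennreal C * w x \<partial>m)"
    by (intro nn_integral_mono) (metis bound mult.commute mult_left_mono zero_le)
  then show ?thesis
    by (simp add: nn_integral_cmult)
qed

lemma dbl_energy_eq_pair_integral:
  assumes [measurable]: "S \<in> sets (m \<Otimes>\<^sub>M m)"
  shows "dbl_energy m p (\<rho> n) S u = (\<integral>\<^sup>+z. indicator S z *
    ennreal (\<bar>u (fst z) - u (snd z)\<bar> powr p * \<rho> n (fst z) (snd z)) \<partial>(m \<Otimes>\<^sub>M m))"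
  unfolding dbl_energy_def by (subst nn_integral_snd[symmetric]) auto

definition far_energy :: "nat \<Rightarrow> real \<Rightarrow> ennreal" where
  "far_energy n R = (\<integral>\<^sup>+z. ennreal (\<bar>u (fst z) - u (snd z)\<bar> powr p) \<partial>far_kernel n R)"

lemma energy_eq_near_plus_far:
  assumes "0 < R"
  shows "energy m p (\<rho> n) u = dbl_energy m p (\<rho> n) (near_pairs R) u + far_energy n R"
proof -
  have far: "far_energy n R = (\<integral>\<^sup>+z. indicator (far_pairs R) z * ennreal (\<rho> n (fst z) (snd z))
      * ennreal (\<bar>u (fst z) - u (snd z)\<bar> powr p) \<partial>(m \<Otimes>\<^sub>M m))"
    unfolding far_energy_def by (rule nn_integral_far_kernel) measurable
  have "indicator {(x, y). x \<noteq> y} z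
        * ennreal (\<bar>u (fst z) - u (snd z)\<bar> powr p * \<rho> n (fst z) (snd z))
      = indicator (near_pairs R) z
        * ennreal (\<bar>u (fst z) - u (snd z)\<bar> powr p * \<rho> n (fst z) (snd z))
        + indicator (far_pairs R) z * ennreal (\<rho> n (fst z) (snd z))
          * ennreal (\<bar>u (fst z) - u (snd z)\<bar> powr p)" for z :: "'a \<times> 'a"
    using assms
    by (cases z)
       (auto simp: near_pairs_def far_pairs_def ennreal_mult'' ac_simps split: split_indicator)
  then show ?thesis
    unfolding energy_def far dbl_energy_eq_pair_integral[OF off_diagonal_measurable]
      dbl_energy_eq_pair_integral[OF near_pairs_measurable]
    by (simp add: nn_integral_add)
qed

definition tail_mass :: "nat \<Rightarrow> real \<Rightarrow> ennreal" where
  "tail_mass n R = (\<integral>\<^sup>+x. ennreal (\<bar>u x\<bar> powr p) * tail m (\<rho> n) x R \<partial>m)"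

definition outer_part :: "'a \<Rightarrow> real \<Rightarrow> 'a \<Rightarrow> ennreal" where
  "outer_part x0 r x = indicator {x. r \<le> dist x0 x} x * ennreal (\<bar>u x\<bar> powr p)"

lemma outer_part_measurable [measurable]: "outer_part x0 r \<in> borel_measurable m"
  unfolding outer_part_def[abs_def] by measurable

definition Lp_mass_outside_ball :: "'a \<Rightarrow> real \<Rightarrow> ennreal" where
  "Lp_mass_outside_ball x0 r = (\<integral>\<^sup>+x. outer_part x0 r x \<partial>m)"

lemma far_pair_abs_diff_powr_le:
  assumes "(x, y) \<in> far_pairs R" and l: "0 < l" "l < 1"
  shows "ennreal (\<bar>u x - u y\<bar> powr p)
    \<le> ennreal (l powr (1 - p)) * (ennreal (\<bar>u x\<bar> powr p) + ennreal (\<bar>u y\<bar> powr p))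
      + ennreal ((1 - l) powr (1 - p)) * (outer_part x0 (R / 2) x + outer_part x0 (R / 2) y)"
proof -
  let ?h = "\<lambda>x. if R / 2 \<le> dist x0 x then \<bar>u x\<bar> powr p else 0"
  have "\<bar>u x - u y\<bar> powr p
      \<le> l powr (1 - p) * (\<bar>u x\<bar> powr p + \<bar>u y\<bar> powr p) + (1 - l) powr (1 - p) * (?h x + ?h y)"
    using far_pair_outside_ball[OF assms(1), of x0] by (intro abs_diff_powr_le_split p l) auto
  then show ?thesis
    unfolding outer_part_def
    by (subst (asm) ennreal_le_iff[symmetric])
       (auto simp: ennreal_mult ennreal_plus split: split_indicator)
qed

lemma far_pair_abs_powr_add_le:
  assumes "(x, y) \<in> far_pairs R" and l: "0 < l" "l < 1"
  shows "ennreal (\<bar>u x\<bar> powr p) + ennreal (\<bar>u y\<bar> powr p)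
    \<le> ennreal (l powr (1 - p)) * ennreal (\<bar>u x - u y\<bar> powr p)
      + ennreal ((1 - l) powr (1 - p) + 1) * (outer_part x0 (R / 2) x + outer_part x0 (R / 2) y)"
proof -
  let ?h = "\<lambda>x. if R / 2 \<le> dist x0 x then \<bar>u x\<bar> powr p else 0"
  have "\<bar>u x\<bar> powr p + \<bar>u y\<bar> powr p
      \<le> l powr (1 - p) * \<bar>u x - u y\<bar> powr p + ((1 - l) powr (1 - p) + 1) * (?h x + ?h y)"
    using far_pair_outside_ball[OF assms(1), of x0] by (intro abs_powr_add_le_split p l) auto
  then show ?thesis
    unfolding outer_part_def
    by (subst (asm) ennreal_le_iff[symmetric])
       (auto simp: ennreal_mult ennreal_plus split: split_indicator)
qed

lemma far_energy_le:
  assumes l: "0 < l" "l < 1" and bound: "\<And>x. tail m (\<rho> n) x R \<le> ennreal C"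
  shows "far_energy n R \<le> ennreal (l powr (1 - p)) * (2 * tail_mass n R)
    + ennreal ((1 - l) powr (1 - p)) * (2 * (ennreal C * Lp_mass_outside_ball x0 (R / 2)))"
proof -
  define c K where "c = ennreal (l powr (1 - p))" and "K = ennreal ((1 - l) powr (1 - p))"
  define g where "g x = ennreal (\<bar>u x\<bar> powr p)" for x
  let ?h = "outer_part x0 (R / 2)"
  have "far_energy n R
      \<le> (\<integral>\<^sup>+z. c * (g (fst z) + g (snd z)) + K * (?h (fst z) + ?h (snd z)) \<partial>far_kernel n R)"
    unfolding far_energy_def c_def K_def g_def
    by (intro nn_integral_mono_AE eventually_mono[OF AE_far_kernel])
       (metis far_pair_abs_diff_powr_le[OF _ l] prod.collapse)
  also have "\<dots> = c * (2 * tail_mass n R) + K * (2 * (\<integral>\<^sup>+x. ?h x * tail m (\<rho> n) x R \<partial>m))"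
  proof -
    have "(\<integral>\<^sup>+z. g (fst z) + g (snd z) \<partial>far_kernel n R) = 2 * tail_mass n R"
      unfolding g_def tail_mass_def by (rule nn_integral_far_kernel_sym) measurable
    moreover have "(\<integral>\<^sup>+z. ?h (fst z) + ?h (snd z) \<partial>far_kernel n R)
        = 2 * (\<integral>\<^sup>+x. ?h x * tail m (\<rho> n) x R \<partial>m)"
      by (rule nn_integral_far_kernel_sym) measurable
    ultimately show ?thesis
      by (subst nn_integral_add) (auto simp: nn_integral_cmult g_def)
  qed
  also have "\<dots> \<le> c * (2 * tail_mass n R) + K * (2 * (ennreal C * Lp_mass_outside_ball x0 (R / 2)))"
    unfolding Lp_mass_outside_ball_def
    by (intro add_left_mono mult_left_mono nn_integral_tail_le bound) auto
  finally show ?thesis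
    unfolding c_def K_def .
qed

lemma tail_mass_le:
  assumes l: "0 < l" "l < 1" and bound: "\<And>x. tail m (\<rho> n) x R \<le> ennreal C"
  shows "2 * tail_mass n R \<le> ennreal (l powr (1 - p)) * far_energy n R
    + ennreal ((1 - l) powr (1 - p) + 1) * (2 * (ennreal C * Lp_mass_outside_ball x0 (R / 2)))"
proof -
  define c K where "c = ennreal (l powr (1 - p))" and "K = ennreal ((1 - l) powr (1 - p) + 1)"
  define g where "g x = ennreal (\<bar>u x\<bar> powr p)" for x
  let ?h = "outer_part x0 (R / 2)"
  have "2 * tail_mass n R = (\<integral>\<^sup>+z. g (fst z) + g (snd z) \<partial>far_kernel n R)"
    unfolding g_def tail_mass_def by (rule nn_integral_far_kernel_sym[symmetric]) measurable
  also have "\<dots> \<le> (\<integral>\<^sup>+z. c * ennreal (\<bar>u (fst z) - u (snd z)\<bar> powr p)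
      + K * (?h (fst z) + ?h (snd z)) \<partial>far_kernel n R)"
    unfolding c_def K_def g_def
    by (intro nn_integral_mono_AE eventually_mono[OF AE_far_kernel])
       (metis far_pair_abs_powr_add_le[OF _ l] prod.collapse)
  also have "\<dots> = c * far_energy n R + K * (2 * (\<integral>\<^sup>+x. ?h x * tail m (\<rho> n) x R \<partial>m))"
  proof -
    have "(\<integral>\<^sup>+z. ?h (fst z) + ?h (snd z) \<partial>far_kernel n R)
        = 2 * (\<integral>\<^sup>+x. ?h x * tail m (\<rho> n) x R \<partial>m)"
      by (rule nn_integral_far_kernel_sym) measurable
    then show ?thesis
      unfolding far_energy_def by (subst nn_integral_add) (auto simp: nn_integral_cmult)
  qed
  also have "\<dots> \<le> c * far_energy n R + K * (2 * (ennreal C * Lp_mass_outside_ball x0 (R / 2)))"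
    unfolding Lp_mass_outside_ball_def
    by (intro add_left_mono mult_left_mono nn_integral_tail_le bound) auto
  finally show ?thesis
    unfolding c_def K_def .
qed

definition asymptotic_tail_mass :: "real \<Rightarrow> ennreal" where
  "asymptotic_tail_mass R =
     (\<integral>\<^sup>+x. ennreal (\<bar>u x\<bar> powr p) * limsup (\<lambda>n. tail m (\<rho> n) x R) \<partial>m)"

lemma limsup_tail_mass_le:
  assumes bound: "\<And>x n. tail m (\<rho> n) x R \<le> ennreal C"
  shows "limsup (\<lambda>n. tail_mass n R) \<le> asymptotic_tail_mass R"
proof -
  have "limsup (\<lambda>n. tail_mass n R)
      \<le> (\<integral>\<^sup>+x. limsup (\<lambda>n. ennreal (\<bar>u x\<bar> powr p) * tail m (\<rho> n) x R) \<partial>m)"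
    unfolding tail_mass_def
  proof (rule nn_integral_limsup[where w = "\<lambda>x. ennreal (\<bar>u x\<bar> powr p) * ennreal C"])
    show "(\<integral>\<^sup>+x. ennreal (\<bar>u x\<bar> powr p) * ennreal C \<partial>m) < \<infinity>"
      using Lp_norm_pow_finite by (simp add: nn_integral_abs_powr_multc ennreal_mult_less_top)
  qed (auto intro!: mult_left_mono bound)
  also have "\<dots> = asymptotic_tail_mass R"
    unfolding asymptotic_tail_mass_def
    by (intro nn_integral_cong) (simp add: Limsup_affine_ennreal[where b = 0, simplified])
  finally show ?thesis .
qed

lemma liminf_tail_mass_ge:
  assumes lower: "\<And>x. ennreal L \<le> liminf (\<lambda>n. tail m (\<rho> n) x R)"
  shows "ennreal L * Lp_norm_pow m p u \<le> liminf (\<lambda>n. tail_mass n R)"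
proof -
  have "ennreal L * Lp_norm_pow m p u = (\<integral>\<^sup>+x. ennreal (\<bar>u x\<bar> powr p) * ennreal L \<partial>m)"
    unfolding nn_integral_abs_powr_multc by (rule mult.commute)
  also have "\<dots> \<le> (\<integral>\<^sup>+x. liminf (\<lambda>n. ennreal (\<bar>u x\<bar> powr p) * tail m (\<rho> n) x R) \<partial>m)"
    by (intro nn_integral_mono)
       (simp add: Liminf_affine_ennreal[where b = 0, simplified] mult_left_mono lower)
  also have "\<dots> \<le> liminf (\<lambda>n. tail_mass n R)"
    unfolding tail_mass_def by (rule nn_integral_liminf) measurable
  finally show ?thesis .
qed

lemma tendsto_Lp_mass_outside_ball: "(Lp_mass_outside_ball x0 \<longlongrightarrow> 0) at_top"
proof -
  have "(Lp_mass_outside_ball x0 \<longlongrightarrow> (\<integral>\<^sup>+x. 0 \<partial>m)) at_top"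
    unfolding Lp_mass_outside_ball_def[abs_def]
  proof (rule nn_integral_dominated_convergence_at_top[where w = "\<lambda>x. ennreal (\<bar>u x\<bar> powr p)"])
    show "(\<integral>\<^sup>+x. ennreal (\<bar>u x\<bar> powr p) \<partial>m) < \<infinity>"
      using Lp_norm_pow_finite by (simp add: Lp_norm_pow_def)
    show "((\<lambda>r. outer_part x0 r x) \<longlongrightarrow> 0) at_top" for x
      using eventually_gt_at_top[of "dist x0 x"]
      by (rule tendsto_eventually[OF eventually_mono]) (simp add: outer_part_def)
  qed (auto simp: outer_part_def indicator_def)
  then show ?thesis
    by simp
qed

lemma tendsto_asymptotic_tail_mass:
  assumes bound: "\<And>R x n. R1 \<le> R \<Longrightarrow> tail m (\<rho> n) x R \<le> ennreal C"
    and lim: "\<And>x. ((\<lambda>R. limsup (\<lambda>n. tail m (\<rho> n) x R)) \<longlongrightarrow> ennreal L) at_top"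
  shows "(asymptotic_tail_mass \<longlongrightarrow> ennreal L * Lp_norm_pow m p u) at_top"
proof -
  have "(asymptotic_tail_mass \<longlongrightarrow> (\<integral>\<^sup>+x. ennreal (\<bar>u x\<bar> powr p) * ennreal L \<partial>m)) at_top"
    unfolding asymptotic_tail_mass_def[abs_def]
  proof (rule nn_integral_dominated_convergence_at_top
      [where w = "\<lambda>x. ennreal (\<bar>u x\<bar> powr p) * ennreal C"])
    show "(\<integral>\<^sup>+x. ennreal (\<bar>u x\<bar> powr p) * ennreal C \<partial>m) < \<infinity>"
      using Lp_norm_pow_finite by (simp add: nn_integral_abs_powr_multc ennreal_mult_less_top)
    show "ennreal (\<bar>u x\<bar> powr p) * limsup (\<lambda>n. tail m (\<rho> n) x R)
        \<le> ennreal (\<bar>u x\<bar> powr p) * ennreal C" if "R1 \<le> R" for R x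
      using bound[OF that] by (intro mult_left_mono Limsup_bounded always_eventually) auto
  qed (auto intro: ennreal_tendsto_cmult lim)
  then show ?thesis
    unfolding nn_integral_abs_powr_multc by (simp only: mult.commute)
qed

lemma limsup_energy_le_approx:
  assumes near: "((\<lambda>n. dbl_energy m p (\<rho> n) (near_pairs R) u) \<longlongrightarrow> 0) sequentially"
    and "0 < R" and l: "0 < l" "l < 1" and bound: "\<And>x n. tail m (\<rho> n) x R \<le> ennreal C"
  shows "limsup (\<lambda>n. energy m p (\<rho> n) u)
    \<le> ennreal (l powr (1 - p)) * (2 * asymptotic_tail_mass R)
      + ennreal ((1 - l) powr (1 - p)) * (2 * (ennreal C * Lp_mass_outside_ball x0 (R / 2)))"
    (is "_ \<le> ?c * (2 * _) + ?D")
proof -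
  have "limsup (\<lambda>n. energy m p (\<rho> n) u)
      \<le> limsup (\<lambda>n. dbl_energy m p (\<rho> n) (near_pairs R) u + ((?c * 2) * tail_mass n R + ?D))"
    using far_energy_le[OF l bound, of _ x0]
    by (intro Limsup_mono always_eventually allI)
       (simp add: energy_eq_near_plus_far[OF \<open>0 < R\<close>] add_left_mono mult.assoc)
  also have "\<dots> \<le> limsup (\<lambda>n. (?c * 2) * tail_mass n R + ?D)"
    by (intro Limsup_add_tendsto_0_ennreal near) simp
  also have "\<dots> = (?c * 2) * limsup (\<lambda>n. tail_mass n R) + ?D"
    by (simp add: Limsup_affine_ennreal ennreal_mult_less_top)
  also have "\<dots> \<le> (?c * 2) * asymptotic_tail_mass R + ?D"
    using bound by (intro add_right_mono mult_left_mono limsup_tail_mass_le) auto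
  finally show ?thesis
    by (simp add: mult.assoc)
qed

lemma liminf_energy_ge_approx:
  assumes "0 < R" and l: "0 < l" "l < 1" and bound: "\<And>x n. tail m (\<rho> n) x R \<le> ennreal C"
    and lower: "\<And>x. ennreal L \<le> liminf (\<lambda>n. tail m (\<rho> n) x R)"
  shows "2 * (ennreal L * Lp_norm_pow m p u)
    \<le> ennreal (l powr (1 - p)) * liminf (\<lambda>n. energy m p (\<rho> n) u)
      + ennreal ((1 - l) powr (1 - p) + 1) * (2 * (ennreal C * Lp_mass_outside_ball x0 (R / 2)))"
    (is "_ \<le> ?c * _ + ?D")
proof -
  have "2 * (ennreal L * Lp_norm_pow m p u) \<le> 2 * liminf (\<lambda>n. tail_mass n R)"
    by (intro mult_left_mono liminf_tail_mass_ge lower) auto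
  also have "\<dots> = liminf (\<lambda>n. 2 * tail_mass n R)"
    by (simp add: Liminf_affine_ennreal[where b = 0, simplified])
  also have "\<dots> \<le> liminf (\<lambda>n. ?c * energy m p (\<rho> n) u + ?D)"
  proof (intro Liminf_mono always_eventually allI)
    fix n
    have "far_energy n R \<le> energy m p (\<rho> n) u"
      by (simp add: energy_eq_near_plus_far[OF \<open>0 < R\<close>])
    then show "2 * tail_mass n R \<le> ?c * energy m p (\<rho> n) u + ?D"
      using tail_mass_le[OF l bound, of n x0]
      by (meson add_right_mono mult_left_mono order_trans zero_le)
  qed
  also have "\<dots> = ?c * liminf (\<lambda>n. energy m p (\<rho> n) u) + ?D"
    by (simp add: Liminf_affine_ennreal)
  finally show ?thesis .
qed

lemma limsup_energy_le:
  assumes near: "\<And>R. 0 < R \<Longrightarrow> ((\<lambda>n. dbl_energy m p (\<rho> n) (near_pairs R) u) \<longlongrightarrow> 0) sequentially"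
    and R1: "0 < R1" and bound: "\<And>R x n. R1 \<le> R \<Longrightarrow> tail m (\<rho> n) x R \<le> ennreal C"
    and lim: "\<And>x. ((\<lambda>R. limsup (\<lambda>n. tail m (\<rho> n) x R)) \<longlongrightarrow> ennreal L) at_top"
  shows "limsup (\<lambda>n. energy m p (\<rho> n) u) \<le> 2 * (ennreal L * Lp_norm_pow m p u)"
proof -
  fix x0 :: 'a
  define c K where "c l = ennreal (l powr (1 - p))" and "K l = ennreal ((1 - l) powr (1 - p))" for l
  define D where "D l R = K l * (2 * (ennreal C * Lp_mass_outside_ball x0 (R / 2)))" for l R
  have "limsup (\<lambda>n. energy m p (\<rho> n) u) \<le> c l * (2 * (ennreal L * Lp_norm_pow m p u))"
    if l: "0 < l" "l < 1" for l
  proof (rule tendsto_lowerbound)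
    have "((\<lambda>R. Lp_mass_outside_ball x0 (R / 2)) \<longlongrightarrow> 0) at_top"
      by (rule filterlim_compose[OF tendsto_Lp_mass_outside_ball filterlim_half_at_top])
    then have "((\<lambda>R. c l * (2 * asymptotic_tail_mass R) + D l R)
        \<longlongrightarrow> c l * (2 * (ennreal L * Lp_norm_pow m p u)) + K l * (2 * (ennreal C * 0))) at_top"
      unfolding D_def c_def K_def
      by (intro tendsto_add ennreal_tendsto_cmult tendsto_asymptotic_tail_mass[OF bound lim]) auto
    then show "((\<lambda>R. c l * (2 * asymptotic_tail_mass R) + D l R)
        \<longlongrightarrow> c l * (2 * (ennreal L * Lp_norm_pow m p u))) at_top"
      by simp
    have approx: "limsup (\<lambda>n. energy m p (\<rho> n) u) \<le> c l * (2 * asymptotic_tail_mass R) + D l R"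
      if "R1 \<le> R" for R
      unfolding c_def D_def K_def using that R1
      by (intro limsup_energy_le_approx near l bound) auto
    show "eventually (\<lambda>R. limsup (\<lambda>n. energy m p (\<rho> n) u)
        \<le> c l * (2 * asymptotic_tail_mass R) + D l R) at_top"
      using eventually_ge_at_top[of R1] by (rule eventually_mono) (rule approx)
  qed simp
  moreover have "((\<lambda>l. c l * (2 * (ennreal L * Lp_norm_pow m p u)))
      \<longlongrightarrow> 2 * (ennreal L * Lp_norm_pow m p u)) (at_left 1)"
    using tendsto_mult_ennreal[OF tendsto_ennreal_powr_at_left_1 tendsto_const]
    unfolding c_def by simp
  ultimately show ?thesis
    by (intro tendsto_lowerbound[where F = "at_left 1"]) (auto intro: eventually_at_left_1)
qed

lemma liminf_energy_ge:
  assumes R1: "0 < R1" and bound: "\<And>R x n. R1 \<le> R \<Longrightarrow> tail m (\<rho> n) x R \<le> ennreal C"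
    and lim: "\<And>x. ((\<lambda>R. liminf (\<lambda>n. tail m (\<rho> n) x R)) \<longlongrightarrow> ennreal L) at_top"
  shows "2 * (ennreal L * Lp_norm_pow m p u) \<le> liminf (\<lambda>n. energy m p (\<rho> n) u)"
proof -
  fix x0 :: 'a
  define c K where "c l = ennreal (l powr (1 - p))" and "K l = ennreal ((1 - l) powr (1 - p) + 1)"
    for l
  define D where "D l R = K l * (2 * (ennreal C * Lp_mass_outside_ball x0 (R / 2)))" for l R
  have "2 * (ennreal L * Lp_norm_pow m p u) \<le> c l * liminf (\<lambda>n. energy m p (\<rho> n) u)"
    if l: "0 < l" "l < 1" for l
  proof (rule tendsto_lowerbound)
    have "((\<lambda>R. Lp_mass_outside_ball x0 (R / 2)) \<longlongrightarrow> 0) at_top"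
      by (rule filterlim_compose[OF tendsto_Lp_mass_outside_ball filterlim_half_at_top])
    then have "((\<lambda>R. c l * liminf (\<lambda>n. energy m p (\<rho> n) u) + D l R)
        \<longlongrightarrow> c l * liminf (\<lambda>n. energy m p (\<rho> n) u) + K l * (2 * (ennreal C * 0))) at_top"
      unfolding D_def K_def by (intro tendsto_add tendsto_const ennreal_tendsto_cmult) auto
    then show "((\<lambda>R. c l * liminf (\<lambda>n. energy m p (\<rho> n) u) + D l R)
        \<longlongrightarrow> c l * liminf (\<lambda>n. energy m p (\<rho> n) u)) at_top"
      by simp
    have approx: "2 * (ennreal L * Lp_norm_pow m p u)
        \<le> c l * liminf (\<lambda>n. energy m p (\<rho> n) u) + D l R" if "R1 \<le> R" for R
      unfolding c_def D_def K_def using that R1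
      by (intro liminf_energy_ge_approx l bound liminf_tail_ge_limit lim) auto
    show "eventually (\<lambda>R. 2 * (ennreal L * Lp_norm_pow m p u)
        \<le> c l * liminf (\<lambda>n. energy m p (\<rho> n) u) + D l R) at_top"
      using eventually_ge_at_top[of R1] by (rule eventually_mono) (rule approx)
  qed simp
  moreover have "((\<lambda>l. c l * liminf (\<lambda>n. energy m p (\<rho> n) u))
      \<longlongrightarrow> liminf (\<lambda>n. energy m p (\<rho> n) u)) (at_left 1)"
    using tendsto_mult_ennreal[OF tendsto_ennreal_powr_at_left_1 tendsto_const]
    unfolding c_def by simp
  ultimately show ?thesis
    by (intro tendsto_lowerbound[where F = "at_left 1"]) (auto intro: eventually_at_left_1)
qed

end

theorem mainTheorem1:
  fixes m :: "'a::polish_space measure" and p :: real and \<rho> :: "nat \<Rightarrow> 'a \<Rightarrow> 'a \<Rightarrow> real"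
    and L :: real and u :: "'a \<Rightarrow> real"
  assumes mms: "mms m"
    and p: "p \<ge> 1"
    and nonneg: "\<And>n x y. x \<noteq> y \<Longrightarrow> \<rho> n x y \<ge> 0"
    and symm: "\<And>n x y. x \<noteq> y \<Longrightarrow> \<rho> n x y = \<rho> n y x"
    and meas: "\<And>n. (\<lambda>(x, y). \<rho> n x y) \<in> borel_measurable (m \<Otimes>\<^sub>M m)"
    and A_L: "L \<ge> 0"
    and A: "\<And>x. ((\<lambda>R. limsup (\<lambda>n. tail m (\<rho> n) x R)) \<longlongrightarrow> ennreal L) at_top
               \<and> ((\<lambda>R. liminf (\<lambda>n. tail m (\<rho> n) x R)) \<longlongrightarrow> ennreal L) at_top"
    and B: "\<And>v. in_Lp m p v \<Longrightarrow> (\<exists>n0. energy m p (\<rho> n0) v < \<infinity>) \<Longrightarrow>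
               (\<forall>R>0. ((\<lambda>n. dbl_energy m p (\<rho> n) {(x, y). 0 < dist x y \<and> dist x y < R} v)
                         \<longlongrightarrow> 0) sequentially)"
    and C: "\<exists>R0. \<forall>R\<ge>R0. R > 0 \<longrightarrow> (\<exists>C::real. \<forall>x n. tail m (\<rho> n) x R \<le> ennreal C)"
    and u: "in_Lp m p u"
    and un0: "\<exists>n0. energy m p (\<rho> n0) u < \<infinity>"
  shows "((\<lambda>n. energy m p (\<rho> n) u) \<longlongrightarrow> ennreal (2 * L) * Lp_norm_pow m p u) sequentially"
proof -
  interpret nonlocal_energy m p \<rho> u
    using mms p symm meas u by unfold_locales
  obtain R1 C where R1: "0 < R1" and bound: "\<And>R x n. R1 \<le> R \<Longrightarrow> tail m (\<rho> n) x R \<le> ennreal C"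
    using uniform_tail_bound[OF C] by blast
  have near: "((\<lambda>n. dbl_energy m p (\<rho> n) (near_pairs R) u) \<longlongrightarrow> 0) sequentially" if "0 < R" for R
    using B[OF u un0] that unfolding near_pairs_def by blast
  have "limsup (\<lambda>n. energy m p (\<rho> n) u) \<le> 2 * (ennreal L * Lp_norm_pow m p u)"
    by (rule limsup_energy_le[OF near R1 bound conjunct1[OF A]])
  moreover have "2 * (ennreal L * Lp_norm_pow m p u) \<le> liminf (\<lambda>n. energy m p (\<rho> n) u)"
    by (rule liminf_energy_ge[OF R1 bound conjunct2[OF A]])
  moreover have "liminf (\<lambda>n. energy m p (\<rho> n) u) \<le> limsup (\<lambda>n. energy m p (\<rho> n) u)"
    by (rule Liminf_le_Limsup) simp
  ultimately have "((\<lambda>n. energy m p (\<rho> n) u) \<longlongrightarrow> 2 * (ennreal L * Lp_norm_pow m p u)) sequentially"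
    by (intro Liminf_eq_Limsup) auto
  then show ?thesis
    using A_L by (simp add: ennreal_mult mult.assoc)
qed

end
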